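(* For every LTL formula $\varphi$ in PNF and every $x\in\Sigma$, $\partial_x(\varphi)=\mathrm{d}_x(\varphi)$.
   Context: LTL formulae in PNF: $\varphi,\psi ::= p \mid \neg p \mid \mathbf{tt} \mid \mathbf{ff} \mid \varphi\wedge\psi \mid \varphi\vee\psi \mid \bigcirc\varphi \mid \varphi\,\mathcal{U}\,\psi \mid \varphi\,\mathcal{R}\,\psi$ (with $\Diamond\varphi=\mathbf{tt}\,\mathcal{U}\,\varphi$, $\Box\varphi=\mathbf{ff}\,\mathcal{R}\,\varphi$), words in $\Sigma^\omega$, interpretation $I:\Sigma\to\mathcal{P}(AP)$. Temporal formula: does not start with $\wedge$ or $\vee$. Monomials $\mu,\nu$: $\mathbf{ff}$ or consistent sets of literals; $x\models\mu$ means all literals of $\mu$ hold under $I(x)$; $\mu\sqcap\nu$ is $\mathbf{ff}$ if either is $\mathbf{ff}$ or $\mu\cup\nu$ is contradictory, else $\mu\cup\nu$. $\varphi\,\dot\wedge\,\psi$: formal conjunction normalized modulo associativity, commutativity, idempotence ($\mathbf{tt}$ = empty formal conjunction). $\mathrm{simp}(\varphi\wedge\psi)=\{\varphi'\,\dot\wedge\,\psi'\mid\varphi'\in\mathrm{simp}(\varphi),\psi'\in\mathrm{simp}(\psi)\}$, $\mathrm{simp}(\varphi\vee\psi)=\mathrm{simp}(\varphi)\cup\mathrm{simp}(\psi)$, $\mathrm{simp}(\varphi)=\{\varphi\}$ for temporal $\varphi$. Linear factors: $\mathrm{LF}(\ell)=\{\langle\{\ell\},\mathbf{tt}\rangle\}$,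 $\mathrm{LF}(\mathbf{tt})=\{\langle\mathbf{tt},\mathbf{tt}\rangle\}$, $\mathrm{LF}(\mathbf{ff})=\{\}$, $\mathrm{LF}(\varphi\vee\psi)=\mathrm{LF}(\varphi)\cup\mathrm{LF}(\psi)$, $\mathrm{LF}(\varphi\wedge\psi)=\{\langle\mu\sqcap\nu,\varphi'\,\dot\wedge\,\psi'\rangle\mid\langle\mu,\varphi'\rangle\in\mathrm{LF}(\varphi),\langle\nu,\psi'\rangle\in\mathrm{LF}(\psi),\mu\sqcap\nu\neq\mathbf{ff}\}$, $\mathrm{LF}(\bigcirc\varphi)=\{\langle\mathbf{tt},\varphi'\rangle\mid\varphi'\in\mathrm{simp}(\varphi)\}$, $\mathrm{LF}(\varphi\,\mathcal{U}\,\psi)=\mathrm{LF}(\psi)\cup\{\langle\mu,\varphi'\,\dot\wedge\,(\varphi\,\mathcal{U}\,\psi)\rangle\mid\langle\mu,\varphi'\rangle\in\mathrm{LF}(\varphi)\}$, $\mathrm{LF}(\varphi\,\mathcal{R}\,\psi)=\{\langle\mu\sqcap\nu,\varphi'\,\dot\wedge\,\psi'\rangle\mid\langle\mu,\varphi'\rangle\in\mathrm{LF}(\varphi),\langle\nu,\psi'\rangle\in\mathrm{LF}(\psi),\mu\sqcap\nu\neq\mathbf{ff}\}\cup\{\langle\nu,\psi'\,\dot\wedge\,(\varphi\,\mathcal{R}\,\psi)\rangle\mid\langle\nu,\psi'\rangle\in\mathrm{LF}(\psi)\}$. Partial derivatives via linear factors: $\partial_x(\varphi)=\{\varphi'\mid\langle\mu,\varphi'\rangle\in\mathrm{LF}(\varphi),x\models\mu\}$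 for temporal $\varphi$, $\partial_x(\mathbf{tt})=\{\mathbf{tt}\}$, $\partial_x(\varphi\,\dot\wedge\,\psi)=\{\varphi'\,\dot\wedge\,\psi'\mid\varphi'\in\partial_x(\varphi),\psi'\in\partial_x(\psi)\}$. Direct partial derivatives: $\mathrm{d}_x(\mathbf{tt})=\{\mathbf{tt}\}$, $\mathrm{d}_x(\mathbf{ff})=\{\}$, $\mathrm{d}_x(\ell)=\{\mathbf{tt}\}$ if $x\models\ell$ and $\{\}$ otherwise, $\mathrm{d}_x(\varphi\vee\psi)=\mathrm{d}_x(\varphi)\cup\mathrm{d}_x(\psi)$, $\mathrm{d}_x(\varphi\wedge\psi)=\{\varphi'\wedge\psi'\mid\varphi'\in\mathrm{d}_x(\varphi),\psi'\in\mathrm{d}_x(\psi)\}$, $\mathrm{d}_x(\bigcirc\varphi)=\mathrm{simp}(\varphi)$, $\mathrm{d}_x(\varphi\,\mathcal{U}\,\psi)=\mathrm{d}_x(\psi)\cup\{\varphi'\wedge(\varphi\,\mathcal{U}\,\psi)\mid\varphi'\in\mathrm{d}_x(\varphi)\}$, $\mathrm{d}_x(\varphi\,\mathcal{R}\,\psi)=\{\varphi'\wedge\psi'\mid\varphi'\in\mathrm{d}_x(\varphi),\psi'\in\mathrm{d}_x(\psi)\}\cup\{\psi'\wedge(\varphi\,\mathcal{R}\,\psi)\mid\psi'\in\mathrm{d}_x(\psi)\}$, $\mathrm{d}_x(\Diamond\varphi)=\mathrm{d}_x(\varphi)\cup\{\Diamond\varphi\}$, $\mathrm{d}_x(\Box\varphi)=\{\varphi'\wedge\Box\varphi\mid\varphi'\in\mathrm{d}_x(\varphi)\}$,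 where conjunctions of temporal formulae in results are normalized (as formal conjunctions). *)

theory Defs
  imports Main
begin

datatype 'a lit = Pos 'a | Neg 'a

datatype 'a ltl =
    Lit "'a lit"
  | TT
  | FF
  | And "'a ltl" "'a ltl"
  | Or "'a ltl" "'a ltl"
  | Next "'a ltl"
  | Until "'a ltl" "'a ltl"
  | Release "'a ltl" "'a ltl"

abbreviation Diamond :: "'a ltl \<Rightarrow> 'a ltl" where "Diamond \<phi> \<equiv> Until TT \<phi>"
abbreviation Box :: "'a ltl \<Rightarrow> 'a ltl" where "Box \<phi> \<equiv> Release FF \<phi>"

fun temporal :: "'a ltl \<Rightarrow> bool" where
  "temporal (And _ _) = False"
| "temporal (Or _ _) = False"
| "temporal _ = True"

text \<open>Formal conjunctions of temporal formulae, normalized modulo ACI, are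
  represented as finite sets of temporal formulae different from tt;
  tt is the empty formal conjunction, and the formal conjunction of two
  formal conjunctions is their union.\<close>
type_synonym 'a fconj = "'a ltl set"

definition fconj_of :: "'a ltl \<Rightarrow> 'a fconj" where
  "fconj_of \<phi> = (if \<phi> = TT then {} else {\<phi>})"

text \<open>Monomials (non-ff ones): sets of literals; the meet is ff if the union is contradictory.\<close>
type_synonym 'a monomial = "'a lit set"

definition consistent :: "'a monomial \<Rightarrow> bool" where
  "consistent \<mu> \<longleftrightarrow> \<not> (\<exists>p. Pos p \<in> \<mu> \<and> Neg p \<in> \<mu>)"

fun sat_lit :: "('s \<Rightarrow> 'a set) \<Rightarrow> 's \<Rightarrow> 'a lit \<Rightarrow> bool" where
  "sat_lit I x (Pos p) \<longleftrightarrow> p \<in> I x"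
| "sat_lit I x (Neg p) \<longleftrightarrow> p \<notin> I x"

definition sat_mon :: "('s \<Rightarrow> 'a set) \<Rightarrow> 's \<Rightarrow> 'a monomial \<Rightarrow> bool" where
  "sat_mon I x \<mu> \<longleftrightarrow> (\<forall>l\<in>\<mu>. sat_lit I x l)"

fun simp :: "'a ltl \<Rightarrow> 'a fconj set" where
  "simp (And \<phi> \<psi>) = {\<phi>' \<union> \<psi>' | \<phi>' \<psi>'. \<phi>' \<in> simp \<phi> \<and> \<psi>' \<in> simp \<psi>}"
| "simp (Or \<phi> \<psi>) = simp \<phi> \<union> simp \<psi>"
| "simp \<phi> = {fconj_of \<phi>}"

fun LF :: "'a ltl \<Rightarrow> ('a monomial \<times> 'a fconj) set" where
  "LF (Lit l) = {({l}, {})}"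
| "LF TT = {({}, {})}"
| "LF FF = {}"
| "LF (Or \<phi> \<psi>) = LF \<phi> \<union> LF \<psi>"
| "LF (And \<phi> \<psi>) = {(\<mu> \<union> \<nu>, \<phi>' \<union> \<psi>') | \<mu> \<phi>' \<nu> \<psi>'.
      (\<mu>, \<phi>') \<in> LF \<phi> \<and> (\<nu>, \<psi>') \<in> LF \<psi> \<and> consistent (\<mu> \<union> \<nu>)}"
| "LF (Next \<phi>) = {({}, \<phi>') | \<phi>'. \<phi>' \<in> simp \<phi>}"
| "LF (Until \<phi> \<psi>) = LF \<psi> \<union>
      {(\<mu>, \<phi>' \<union> {Until \<phi> \<psi>}) | \<mu> \<phi>'. (\<mu>, \<phi>') \<in> LF \<phi>}"
| "LF (Release \<phi> \<psi>) = {(\<mu> \<union> \<nu>, \<phi>' \<union> \<psi>') | \<mu> \<phi>' \<nu> \<psi>'.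
      (\<mu>, \<phi>') \<in> LF \<phi> \<and> (\<nu>, \<psi>') \<in> LF \<psi> \<and> consistent (\<mu> \<union> \<nu>)}
    \<union> {(\<nu>, \<psi>' \<union> {Release \<phi> \<psi>}) | \<nu> \<psi>'. (\<nu>, \<psi>') \<in> LF \<psi>}"

definition pderiv_LF :: "('s \<Rightarrow> 'a set) \<Rightarrow> 's \<Rightarrow> 'a ltl \<Rightarrow> 'a fconj set" where
  "pderiv_LF I x \<phi> = {\<phi>' | \<mu> \<phi>'. (\<mu>, \<phi>') \<in> LF \<phi> \<and> sat_mon I x \<mu>}"

definition pderiv_fconj :: "('s \<Rightarrow> 'a set) \<Rightarrow> 's \<Rightarrow> 'a fconj \<Rightarrow> 'a fconj set" where
  "pderiv_fconj I x C = {\<Union> (f ` C) | f. \<forall>\<phi>\<in>C. f \<phi> \<in> pderiv_LF I x \<phi>}"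

text \<open>Direct partial derivatives. (The clauses for Diamond and Box in the paper are
  instances of the Until/Release clauses after normalization.)\<close>
fun dderiv :: "('s \<Rightarrow> 'a set) \<Rightarrow> 's \<Rightarrow> 'a ltl \<Rightarrow> 'a fconj set" where
  "dderiv I x TT = {{}}"
| "dderiv I x FF = {}"
| "dderiv I x (Lit l) = (if sat_lit I x l then {{}} else {})"
| "dderiv I x (Or \<phi> \<psi>) = dderiv I x \<phi> \<union> dderiv I x \<psi>"
| "dderiv I x (And \<phi> \<psi>) = {\<phi>' \<union> \<psi>' | \<phi>' \<psi>'. \<phi>' \<in> dderiv I x \<phi> \<and> \<psi>' \<in> dderiv I x \<psi>}"
| "dderiv I x (Next \<phi>) = simp \<phi>"
| "dderiv I x (Until \<phi> \<psi>) = dderiv I x \<psi> \<union> {\<phi>' \<union> {Until \<phi> \<psi>} | \<phi>'. \<phi>' \<in> dderiv I x \<phi>}"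
| "dderiv I x (Release \<phi> \<psi>) =
     {\<phi>' \<union> \<psi>' | \<phi>' \<psi>'. \<phi>' \<in> dderiv I x \<phi> \<and> \<psi>' \<in> dderiv I x \<psi>}
   \<union> {\<psi>' \<union> {Release \<phi> \<psi>} | \<psi>'. \<psi>' \<in> dderiv I x \<psi>}"

end

theory Submission
  imports Defs
begin

text \<open>A monomial satisfied by some letter is consistent, so the consistency side condition
  in the linear factors of conjunctions and releases never discards a factor that
  contributes to a derivative. With that, taking the derivatives enabled at x commutes
  with each way the linear factors of a formula are built from those of its subformulas,
  and both sides satisfy the same recursion.\<close>

definition sat_targets :: "('s \<Rightarrow> 'a set) \<Rightarrow> 's \<Rightarrow> ('a monomial \<times> 'a fconj) set \<Rightarrow> 'a fconj set" where
  "sat_targets I x A = {\<phi>' | \<mu> \<phi>'. (\<mu>, \<phi>') \<in> A \<and> sat_mon I x \<mu>}"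

lemma pderiv_LF_eq_sat_targets: "pderiv_LF I x \<phi> = sat_targets I x (LF \<phi>)"
  by (simp add: pderiv_LF_def sat_targets_def)

lemma sat_mon_Un [simp]: "sat_mon I x (\<mu> \<union> \<nu>) \<longleftrightarrow> sat_mon I x \<mu> \<and> sat_mon I x \<nu>"
  by (auto simp: sat_mon_def)

lemma consistent_if_sat_mon: "sat_mon I x \<mu> \<Longrightarrow> consistent \<mu>"
  unfolding sat_mon_def consistent_def by (metis sat_lit.simps)

lemma sat_targets_Un: "sat_targets I x (A \<union> B) = sat_targets I x A \<union> sat_targets I x B"
  by (auto simp: sat_targets_def)

lemma sat_targets_meet:
  "sat_targets I x {(\<mu> \<union> \<nu>, \<phi>' \<union> \<psi>') | \<mu> \<phi>' \<nu> \<psi>'.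
      (\<mu>, \<phi>') \<in> A \<and> (\<nu>, \<psi>') \<in> B \<and> consistent (\<mu> \<union> \<nu>)}
   = {\<phi>' \<union> \<psi>' | \<phi>' \<psi>'. \<phi>' \<in> sat_targets I x A \<and> \<psi>' \<in> sat_targets I x B}"
proof (intro set_eqI iffI)
  fix \<chi>
  assume "\<chi> \<in> sat_targets I x {(\<mu> \<union> \<nu>, \<phi>' \<union> \<psi>') | \<mu> \<phi>' \<nu> \<psi>'.
      (\<mu>, \<phi>') \<in> A \<and> (\<nu>, \<psi>') \<in> B \<and> consistent (\<mu> \<union> \<nu>)}"
  then obtain \<mu> \<phi>' \<nu> \<psi>' where "\<chi> = \<phi>' \<union> \<psi>'" "(\<mu>, \<phi>') \<in> A" "(\<nu>, \<psi>') \<in> B"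
    "sat_mon I x \<mu>" "sat_mon I x \<nu>"
    unfolding sat_targets_def by auto
  then show "\<chi> \<in> {\<phi>' \<union> \<psi>' | \<phi>' \<psi>'. \<phi>' \<in> sat_targets I x A \<and> \<psi>' \<in> sat_targets I x B}"
    unfolding sat_targets_def by blast
next
  fix \<chi>
  assume "\<chi> \<in> {\<phi>' \<union> \<psi>' | \<phi>' \<psi>'. \<phi>' \<in> sat_targets I x A \<and> \<psi>' \<in> sat_targets I x B}"
  then obtain \<mu> \<phi>' \<nu> \<psi>' where "\<chi> = \<phi>' \<union> \<psi>'" "(\<mu>, \<phi>') \<in> A" "(\<nu>, \<psi>') \<in> B"
    and sat: "sat_mon I x (\<mu> \<union> \<nu>)"
    unfolding sat_targets_def by auto
  moreover have "consistent (\<mu> \<union> \<nu>)"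
    using sat by (rule consistent_if_sat_mon)
  ultimately show "\<chi> \<in> sat_targets I x {(\<mu> \<union> \<nu>, \<phi>' \<union> \<psi>') | \<mu> \<phi>' \<nu> \<psi>'.
      (\<mu>, \<phi>') \<in> A \<and> (\<nu>, \<psi>') \<in> B \<and> consistent (\<mu> \<union> \<nu>)}"
    unfolding sat_targets_def by blast
qed

lemma sat_targets_extend:
  "sat_targets I x {(\<mu>, \<phi>' \<union> C) | \<mu> \<phi>'. (\<mu>, \<phi>') \<in> A}
   = {\<phi>' \<union> C | \<phi>'. \<phi>' \<in> sat_targets I x A}"
  unfolding sat_targets_def by blast

theorem lemma8:
  fixes I :: "'s \<Rightarrow> 'a set" and x :: 's and \<phi> :: "'a ltl"
  shows "pderiv_LF I x \<phi> = dderiv I x \<phi>"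
  unfolding pderiv_LF_eq_sat_targets
proof (induction \<phi>)
  case (And \<phi> \<psi>)
  then show ?case
    unfolding LF.simps sat_targets_meet by simp
next
  case (Until \<phi> \<psi>)
  then show ?case
    unfolding LF.simps sat_targets_Un sat_targets_extend by simp
next
  case (Release \<phi> \<psi>)
  then show ?case
    unfolding LF.simps sat_targets_Un sat_targets_meet sat_targets_extend by simp
qed (auto simp: sat_targets_def sat_mon_def)

end
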